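(* Let $V\in L^1(\mathbb{R}^3)$ be real-valued, $\lambda>0$, and for $\varepsilon\in(0,1]$ let $A^{(\lambda)}_\varepsilon$, $C^{(\lambda)}_\varepsilon$ be the operators on $L^2(\mathbb{R}^3)$ with integral kernels $A^{(\lambda)}_\varepsilon(x,y)=G_\lambda(x-\varepsilon y)\sqrt{|V(y)|}$ and $C^{(\lambda)}_\varepsilon(x,y)=\mathrm{sign}(V(x))\sqrt{|V(x)|}\,G_\lambda(\varepsilon x-y)$. Then, as $\varepsilon\downarrow0$, $$A^{(\lambda)}_\varepsilon\to A^{(\lambda)}:=\big|G_\lambda\big\rangle\big\langle\sqrt{|V|}\big|,\qquad C^{(\lambda)}_\varepsilon\to C^{(\lambda)}:=\big|\mathrm{sign}(V)\sqrt{|V|}\big\rangle\big\langle G_\lambda\big|$$ in Hilbert–Schmidt norm.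
   Context: $G_\lambda(x):=\frac{e^{-|x|\sqrt\lambda}}{4\pi|x|}$ on $\mathbb{R}^3$. For $f,g\in L^2(\mathbb{R}^3)$, $|f\rangle\langle g|$ denotes the rank-one operator $h\mapsto\big(\int_{\mathbb{R}^3}\overline{g}\,h\,\mathrm{d}x\big)f$. *)

theory Defs
  imports "HOL-Analysis.Analysis"
begin

text \<open>Yukawa-type Green function G_lambda(x) = exp(-|x| sqrt lambda) / (4 pi |x|) on R^3
  (value at x = 0 is irrelevant: a null set; Isabelle's division by zero gives 0).\<close>
definition G :: "real \<Rightarrow> real^3 \<Rightarrow> real" where
  "G lam x = exp (- norm x * sqrt lam) / (4 * pi * norm x)"

text \<open>Integral kernel of the rank-one operator |f><g| : h \<mapsto> (\<integral> conj(g) h) f,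
  namely (x,y) \<mapsto> f x * conj (g y) (all functions here are real-valued).\<close>
definition rank_one_kernel :: "(real^3 \<Rightarrow> real) \<Rightarrow> (real^3 \<Rightarrow> real) \<Rightarrow> real^3 \<Rightarrow> real^3 \<Rightarrow> real" where
  "rank_one_kernel f g x y = f x * g y"

text \<open>Squared Hilbert-Schmidt norm of the integral operator on L^2(R^3) with kernel K:
  the squared L^2(R^3 x R^3) norm of K (possibly infinite).\<close>
definition hs_norm_sq :: "(real^3 \<Rightarrow> real^3 \<Rightarrow> real) \<Rightarrow> ennreal" where
  "hs_norm_sq K = (\<integral>\<^sup>+ p. ennreal ((K (fst p) (snd p))\<^sup>2) \<partial>lborel)"

definition A_kernel :: "(real^3 \<Rightarrow> real) \<Rightarrow> real \<Rightarrow> real \<Rightarrow> real^3 \<Rightarrow> real^3 \<Rightarrow> real" where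
  "A_kernel V lam eps x y = G lam (x - eps *\<^sub>R y) * sqrt \<bar>V y\<bar>"

definition C_kernel :: "(real^3 \<Rightarrow> real) \<Rightarrow> real \<Rightarrow> real \<Rightarrow> real^3 \<Rightarrow> real^3 \<Rightarrow> real" where
  "C_kernel V lam eps x y = sgn (V x) * sqrt \<bar>V x\<bar> * G lam (eps *\<^sub>R x - y)"

end

theory Submission
  imports Defs
begin

(* The squared difference kernels factor as |V(y)| (G(x - eps y) - G(x))^2 (for C with x and y
   swapped, using G(-z) = G(z)), so by Tonelli the squared Hilbert-Schmidt norm is the integral
   of |V(y)| ||G(. - eps y) - G||^2 dy.  On R^3 we have G^2 <= max(1, 1/lam) min(|x|^-2, |x|^-4),
   which is integrable because 2 < 3 < 4.  Hence the translation defect ||G(. - h) - G||^2 is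
   bounded by 4 ||G||^2 and tends to 0 with h (continuity of translation in L^2), and dominated
   convergence with the integrable majorant 4 ||G||^2 |V| gives the limit 0. *)

lemma ex_power_two_bracket:
  fixes r :: real
  assumes "1 \<le> r"
  obtains k :: nat where "2 ^ k \<le> r" "r < 2 ^ Suc k"
proof -
  define k where "k = nat \<lfloor>log 2 r\<rfloor>"
  have "\<lfloor>log 2 r\<rfloor> = int k"
    using assms by (simp add: k_def)
  then have "2 powr real k \<le> r \<and> r < 2 powr (real k + 1)"
    using assms floor_log_eq_powr_iff[of r 2 "int k"] by simp
  moreover have "2 powr (real k + 1) = (2::real) ^ Suc k"
    by (metis of_nat_Suc add.commute powr_realpow zero_less_numeral)
  ultimately show thesis
    using that[of k] by (simp add: powr_realpow)
qed

lemma ex_half_power_bracket: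
  fixes r :: real
  assumes "0 < r" "r \<le> 1"
  obtains k :: nat where "(1/2) ^ Suc k < r" "r \<le> (1/2) ^ k"
proof -
  obtain k :: nat where "2 ^ k \<le> 1 / r" "1 / r < 2 ^ Suc k"
    using ex_power_two_bracket[of "1 / r"] assms by auto
  with assms show thesis
    by (intro that[of k]) (simp_all add: field_simps del: power_Suc)
qed

lemma sets_borel_cball [measurable]: "cball c r \<in> sets borel"
  by (simp add: borel_closed)

(* The k-th term dominates |x|^-p on the shell 2^-(k+1) < |x| <= 2^-k
   and |x|^-q on the shell 2^k <= |x| < 2^(k+1). *)
definition dyadic_majorant :: "nat \<Rightarrow> nat \<Rightarrow> 'a::euclidean_space \<Rightarrow> ennreal" where
  "dyadic_majorant p q x =
     (\<Sum>k. ennreal ((2 ^ p) ^ Suc k) * indicator (cball 0 ((1/2) ^ k)) x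
        + ennreal ((1 / 2 ^ q) ^ k) * indicator (cball 0 (2 ^ Suc k)) x)"

lemma dyadic_majorant_measurable [measurable]: "dyadic_majorant p q \<in> borel_measurable borel"
  unfolding dyadic_majorant_def by measurable

lemma min_inverse_norm_powers_le_dyadic_majorant:
  fixes x :: "'a::euclidean_space"
  assumes "0 < q"
  shows "ennreal (min (1 / norm x ^ p) (1 / norm x ^ q)) \<le> dyadic_majorant p q x"
proof -
  let ?u = "\<lambda>k. ennreal ((2 ^ p) ^ Suc k) * indicator (cball 0 ((1/2) ^ k)) x
        + ennreal ((1 / 2 ^ q) ^ k) * indicator (cball 0 (2 ^ Suc k)) x"
  have "\<exists>k. ennreal (min (1 / norm x ^ p) (1 / norm x ^ q)) \<le> ?u k"
  proof (cases "norm x \<le> 1")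
    case True
    show ?thesis
    proof (cases "x = 0")
      case True
      with assms show ?thesis
        by (simp add: power_0_left)
    next
      case False
      then obtain k where k: "(1/2) ^ Suc k < norm x" "norm x \<le> (1/2) ^ k"
        using ex_half_power_bracket[of "norm x"] \<open>norm x \<le> 1\<close> by auto
      have "((1/2) ^ Suc k) ^ p \<le> norm x ^ p"
        using k(1) by (intro power_mono) auto
      then have "1 / norm x ^ p \<le> (2 ^ p) ^ Suc k"
        using False by (simp add: divide_simps mult_ac flip: power_mult)
      then show ?thesis
        using k(2) by (intro exI[of _ k])
          (auto simp: min_le_iff_disj ennreal_leI intro: add_increasing2)
    qed
  next
    case False
    then obtain k where k: "2 ^ k \<le> norm x" "norm x < 2 ^ Suc k"
      using ex_power_two_bracket[of "norm x"] by auto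
    have "(2 ^ k) ^ q \<le> norm x ^ q"
      using k(1) by (intro power_mono) auto
    then have "1 / norm x ^ q \<le> (1 / 2 ^ q) ^ k"
      using False by (simp add: divide_simps mult.commute flip: power_mult)
    then show ?thesis
      using k(2) by (intro exI[of _ k])
        (auto simp: min_le_iff_disj ennreal_leI intro: add_increasing)
  qed
  then show ?thesis
    unfolding dyadic_majorant_def
    using sum_le_suminf[OF summableI, of "{k}" ?u for k] order_trans by fastforce
qed

lemma nn_integral_dyadic_majorant_finite:
  assumes p: "p < DIM('a)" and q: "DIM('a) < q"
  shows "(\<integral>\<^sup>+x. dyadic_majorant p q (x::'a::euclidean_space) \<partial>lborel) < \<infinity>"
proof -
  let ?n = "DIM('a)"
  let ?c = "\<lambda>k. unit_ball_vol ?n * (2 ^ p * (2 ^ p / 2 ^ ?n) ^ k + 2 ^ ?n * (2 ^ ?n / 2 ^ q) ^ k)"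
  have "(\<integral>\<^sup>+x. dyadic_majorant p q (x::'a) \<partial>lborel)
      = (\<Sum>k. ennreal ((2 ^ p) ^ Suc k) * emeasure lborel (cball (0::'a) ((1/2) ^ k))
           + ennreal ((1 / 2 ^ q) ^ k) * emeasure lborel (cball (0::'a) (2 ^ Suc k)))"
    unfolding dyadic_majorant_def
    by (subst nn_integral_suminf) (simp_all add: nn_integral_add nn_integral_cmult_indicator)
  also have "\<dots> = (\<Sum>k. ennreal (?c k))"
  proof (intro suminf_cong)
    fix k
    have "(2 ^ p) ^ Suc k * ((1/2) ^ k) ^ ?n + (1 / 2 ^ q) ^ k * (2 ^ Suc k) ^ ?n
        = 2 ^ p * (2 ^ p / 2 ^ ?n) ^ k + 2 ^ ?n * (2 ^ ?n / (2::real) ^ q) ^ k"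
      by (simp add: power_divide power_mult_distrib field_simps flip: power_mult)
    moreover have "ennreal ((2 ^ p) ^ Suc k) * emeasure lborel (cball (0::'a) ((1/2) ^ k))
           + ennreal ((1 / 2 ^ q) ^ k) * emeasure lborel (cball (0::'a) (2 ^ Suc k))
        = ennreal (unit_ball_vol ?n * ((2 ^ p) ^ Suc k * ((1/2) ^ k) ^ ?n + (1 / 2 ^ q) ^ k * (2 ^ Suc k) ^ ?n))"
      by (simp add: emeasure_cball algebra_simps flip: ennreal_mult ennreal_plus)
    ultimately show "ennreal ((2 ^ p) ^ Suc k) * emeasure lborel (cball (0::'a) ((1/2) ^ k))
           + ennreal ((1 / 2 ^ q) ^ k) * emeasure lborel (cball (0::'a) (2 ^ Suc k)) = ennreal (?c k)"
      by (simp only:)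
  qed
  also have "\<dots> < \<infinity>"
  proof -
    have "(2::real) ^ p / 2 ^ ?n < 1" "(2::real) ^ ?n / 2 ^ q < 1"
      using p q by simp_all
    then have "summable ?c"
      by (intro summable_mult summable_add summable_geometric) simp_all
    then show ?thesis
      by (subst suminf_ennreal2) auto
  qed
  finally show ?thesis .
qed

lemma integrable_min_inverse_norm_powers:
  assumes "p < DIM('a)" and "DIM('a) < q"
  shows "integrable lborel (\<lambda>x::'a::euclidean_space. min (1 / norm x ^ p) (1 / norm x ^ q))"
proof -
  have "(\<integral>\<^sup>+x. ennreal (min (1 / norm (x::'a) ^ p) (1 / norm x ^ q)) \<partial>lborel)
      \<le> (\<integral>\<^sup>+x. dyadic_majorant p q (x::'a) \<partial>lborel)"
    using assms by (intro nn_integral_mono min_inverse_norm_powers_le_dyadic_majorant) simp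
  also have "\<dots> < \<infinity>"
    using assms by (rule nn_integral_dyadic_majorant_finite)
  finally show ?thesis
    by (subst integrable_iff_bounded) auto
qed

lemma nn_integral_lborel_translate:
  fixes f :: "'a::euclidean_space \<Rightarrow> ennreal"
  assumes [measurable]: "f \<in> borel_measurable borel"
  shows "(\<integral>\<^sup>+x. f (x - h) \<partial>lborel) = (\<integral>\<^sup>+x. f x \<partial>lborel)"
proof -
  have "(\<integral>\<^sup>+x. f x \<partial>lborel) = (\<integral>\<^sup>+x. f x \<partial>distr lborel borel ((+) (- h)))"
    by (simp add: lborel_distr_plus)
  also have "\<dots> = (\<integral>\<^sup>+x. f (- h + x) \<partial>lborel)"
    by (rule nn_integral_distr) auto
  finally show ?thesis
    by simp
qed

lemma sq_diff_le_abs_diff_sq: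
  fixes a b :: real
  assumes "0 \<le> a" "0 \<le> b"
  shows "(a - b)\<^sup>2 \<le> \<bar>a\<^sup>2 - b\<^sup>2\<bar>"
proof -
  have "(a - b)\<^sup>2 = \<bar>a - b\<bar> * \<bar>a - b\<bar>"
    by (simp add: power2_eq_square)
  also have "\<dots> \<le> \<bar>a - b\<bar> * (a + b)"
    using assms by (intro mult_left_mono) auto
  also have "\<dots> = \<bar>(a - b) * (a + b)\<bar>"
    using assms by (simp add: abs_mult)
  also have "\<dots> = \<bar>a\<^sup>2 - b\<^sup>2\<bar>"
    by (simp add: power2_eq_square algebra_simps)
  finally show ?thesis .
qed

definition sq_dist_translate :: "('a::euclidean_space \<Rightarrow> real) \<Rightarrow> 'a \<Rightarrow> ennreal" where
  "sq_dist_translate f h = (\<integral>\<^sup>+x. ennreal ((f (x - h) - f x)\<^sup>2) \<partial>lborel)"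

lemma sq_dist_translate_measurable [measurable]:
  assumes [measurable]: "f \<in> borel_measurable borel"
  shows "sq_dist_translate f \<in> borel_measurable borel"
proof -
  have [measurable]: "f \<in> borel_measurable lborel"
    by simp
  show ?thesis
    unfolding sq_dist_translate_def by measurable
qed

lemma sq_dist_translate_le:
  assumes [measurable]: "f \<in> borel_measurable borel"
  shows "sq_dist_translate f h \<le> 4 * (\<integral>\<^sup>+x. ennreal ((f x)\<^sup>2) \<partial>lborel)"
proof -
  have "sq_dist_translate f h \<le> (\<integral>\<^sup>+x. 2 * ennreal ((f (x - h))\<^sup>2) + 2 * ennreal ((f x)\<^sup>2) \<partial>lborel)"
    unfolding sq_dist_translate_def
  proof (intro nn_integral_mono)
    fix x
    have "(f (x - h) - f x)\<^sup>2 \<le> 2 * (f (x - h))\<^sup>2 + 2 * (f x)\<^sup>2"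
      using zero_le_power2[of "f (x - h) + f x"] by (simp add: power2_eq_square algebra_simps)
    then have "ennreal ((f (x - h) - f x)\<^sup>2) \<le> ennreal (2 * (f (x - h))\<^sup>2 + 2 * (f x)\<^sup>2)"
      by (rule ennreal_leI)
    then show "ennreal ((f (x - h) - f x)\<^sup>2) \<le> 2 * ennreal ((f (x - h))\<^sup>2) + 2 * ennreal ((f x)\<^sup>2)"
      by (simp add: ennreal_mult)
  qed
  also have "\<dots> = 2 * (\<integral>\<^sup>+x. ennreal ((f (x - h))\<^sup>2) \<partial>lborel) + 2 * (\<integral>\<^sup>+x. ennreal ((f x)\<^sup>2) \<partial>lborel)"
    by (simp add: nn_integral_add nn_integral_cmult)
  also have "(\<integral>\<^sup>+x. ennreal ((f (x - h))\<^sup>2) \<partial>lborel) = (\<integral>\<^sup>+x. ennreal ((f x)\<^sup>2) \<partial>lborel)"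
    by (rule nn_integral_lborel_translate[where f = "\<lambda>x. ennreal ((f x)\<^sup>2)"]) measurable
  finally show ?thesis
    by (simp add: distrib_right[symmetric])
qed

lemma sq_dist_translate_tendsto_0:
  fixes f :: "'a::euclidean_space \<Rightarrow> real"
  assumes [measurable]: "f \<in> borel_measurable borel"
    and nonneg: "\<And>x. 0 \<le> f x" and sq_int: "integrable lborel (\<lambda>x. (f x)\<^sup>2)"
    and cont: "AE x in lborel. isCont f x" and h: "h \<longlonglongrightarrow> 0"
  shows "(\<lambda>n. sq_dist_translate f (h n)) \<longlonglongrightarrow> 0"
proof -
  have "AE x in lborel. (\<lambda>n. (f (x - h n))\<^sup>2) \<longlonglongrightarrow> (f x)\<^sup>2"
    using cont
  proof eventually_elim
    case (elim x)
    have "(\<lambda>n. x - h n) \<longlonglongrightarrow> x"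
      using tendsto_diff[OF tendsto_const h] by simp
    then show ?case
      by (intro tendsto_intros isCont_tendsto_compose[OF elim])
  qed
  \<comment> \<open>Scheffe: the translated squares converge a.e. and have the same integral,
    hence converge in L1.\<close>
  moreover have "(\<integral>\<^sup>+x. ennreal (norm ((f (x - h n))\<^sup>2)) \<partial>lborel) = (\<integral>\<^sup>+x. ennreal (norm ((f x)\<^sup>2)) \<partial>lborel)" for n
    by (rule nn_integral_lborel_translate[where f = "\<lambda>x. ennreal (norm ((f x)\<^sup>2))"]) measurable
  ultimately have Scheffe: "(\<lambda>n. \<integral>\<^sup>+x. norm ((f (x - h n))\<^sup>2 - (f x)\<^sup>2) \<partial>lborel) \<longlonglongrightarrow> 0"
    by (intro Scheffe_lemma2[OF _ sq_int]) auto
  have "sq_dist_translate f (h n) \<le> (\<integral>\<^sup>+x. norm ((f (x - h n))\<^sup>2 - (f x)\<^sup>2) \<partial>lborel)" for n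
    unfolding sq_dist_translate_def
    by (intro nn_integral_mono ennreal_leI) (simp add: sq_diff_le_abs_diff_sq nonneg)
  then show ?thesis
    by (intro tendsto_sandwich[OF _ _ tendsto_const Scheffe]) auto
qed

lemma weighted_sq_dist_translate_tendsto_0:
  fixes V f :: "'a::euclidean_space \<Rightarrow> real"
  assumes V: "integrable lborel V" and f_meas [measurable]: "f \<in> borel_measurable borel"
    and nonneg: "\<And>x. 0 \<le> f x" and sq_int: "integrable lborel (\<lambda>x. (f x)\<^sup>2)"
    and cont: "AE x in lborel. isCont f x"
  shows "((\<lambda>t. \<integral>\<^sup>+y. ennreal \<bar>V y\<bar> * sq_dist_translate f (t *\<^sub>R y) \<partial>lborel) \<longlongrightarrow> 0) (at 0)"
  unfolding tendsto_at_iff_sequentially comp_def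
proof (intro allI impI)
  fix t :: "nat \<Rightarrow> real"
  assume "t \<longlonglongrightarrow> 0"
  have [measurable]: "V \<in> borel_measurable lborel"
    using V by simp
  define M where "M = 4 * (\<integral>\<^sup>+x. ennreal ((f x)\<^sup>2) \<partial>lborel)"
  have "M < \<infinity>"
    using sq_int by (simp add: M_def integrable_iff_bounded ennreal_mult_less_top)
  moreover have "(\<integral>\<^sup>+y. ennreal \<bar>V y\<bar> \<partial>lborel) < \<infinity>"
    using V by (simp add: integrable_iff_bounded)
  ultimately have dominant: "(\<integral>\<^sup>+y. ennreal \<bar>V y\<bar> * M \<partial>lborel) < \<infinity>"
    by (simp add: nn_integral_multc ennreal_mult_less_top)
  have pointwise: "AE y in lborel. (\<lambda>i. ennreal \<bar>V y\<bar> * sq_dist_translate f (t i *\<^sub>R y)) \<longlonglongrightarrow> 0"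
  proof (intro AE_I2)
    fix y :: 'a
    have "(\<lambda>i. t i *\<^sub>R y) \<longlonglongrightarrow> 0"
      using tendsto_scaleR[OF \<open>t \<longlonglongrightarrow> 0\<close> tendsto_const, of y] by simp
    then have "(\<lambda>i. sq_dist_translate f (t i *\<^sub>R y)) \<longlonglongrightarrow> 0"
      by (rule sq_dist_translate_tendsto_0[OF f_meas nonneg sq_int cont])
    then show "(\<lambda>i. ennreal \<bar>V y\<bar> * sq_dist_translate f (t i *\<^sub>R y)) \<longlonglongrightarrow> 0"
      using ennreal_tendsto_cmult[of "ennreal \<bar>V y\<bar>"] by fastforce
  qed
  have "(\<lambda>i. \<integral>\<^sup>+y. ennreal \<bar>V y\<bar> * sq_dist_translate f (t i *\<^sub>R y) \<partial>lborel) \<longlonglongrightarrow> (\<integral>\<^sup>+(y::'a). 0 \<partial>lborel)"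
    using dominant pointwise
    by (intro nn_integral_dominated_convergence[where w = "\<lambda>y. ennreal \<bar>V y\<bar> * M"])
      (auto intro!: mult_left_mono sq_dist_translate_le simp: M_def)
  then show "(\<lambda>i. \<integral>\<^sup>+y. ennreal \<bar>V y\<bar> * sq_dist_translate f (t i *\<^sub>R y) \<partial>lborel) \<longlonglongrightarrow> 0"
    by simp
qed

lemma hs_norm_sq_iterated:
  assumes "(\<lambda>p. K (fst p) (snd p)) \<in> borel_measurable (lborel \<Otimes>\<^sub>M lborel)"
  shows "hs_norm_sq K = (\<integral>\<^sup>+x. \<integral>\<^sup>+y. ennreal ((K x y)\<^sup>2) \<partial>lborel \<partial>lborel)"
    and "hs_norm_sq K = (\<integral>\<^sup>+y. \<integral>\<^sup>+x. ennreal ((K x y)\<^sup>2) \<partial>lborel \<partial>lborel)"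
proof -
  have meas: "(\<lambda>p. ennreal ((K (fst p) (snd p))\<^sup>2)) \<in> borel_measurable (lborel \<Otimes>\<^sub>M lborel)"
    using assms by measurable
  show "hs_norm_sq K = (\<integral>\<^sup>+x. \<integral>\<^sup>+y. ennreal ((K x y)\<^sup>2) \<partial>lborel \<partial>lborel)"
    unfolding hs_norm_sq_def lborel_prod[symmetric] using lborel.nn_integral_fst[OF meas] by simp
  show "hs_norm_sq K = (\<integral>\<^sup>+y. \<integral>\<^sup>+x. ennreal ((K x y)\<^sup>2) \<partial>lborel \<partial>lborel)"
    unfolding hs_norm_sq_def lborel_prod[symmetric] using lborel_pair.nn_integral_snd[OF meas] by simp
qed

lemma G_nonneg: "0 \<le> G lam x"
  unfolding G_def by simp

lemma G_minus_commute: "G lam (x - y) = G lam (y - x)"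
  unfolding G_def by (simp add: norm_minus_commute)

lemma G_measurable [measurable]: "G lam \<in> borel_measurable borel"
  unfolding G_def by measurable

lemma isCont_G: "x \<noteq> 0 \<Longrightarrow> isCont (G lam) x"
  unfolding G_def by (intro continuous_intros) auto

lemma G_le:
  assumes "0 < lam" and "x \<noteq> 0"
  shows "G lam x \<le> 1 / norm x" and "G lam x \<le> 1 / (sqrt lam * (norm x)\<^sup>2)"
proof -
  define r a where "r = norm x" and "a = sqrt lam"
  have "0 < r" "0 < a"
    using assms by (simp_all add: r_def a_def)
  have G_eq: "G lam x = exp (- (r * a)) / (4 * pi * r)"
    by (simp add: G_def r_def a_def)
  have "1 \<le> 4 * pi"
    using pi_gt3 by linarith
  then have "r \<le> 4 * pi * r"
    using \<open>0 < r\<close> by simp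
  have "exp (- (r * a)) \<le> 1"
    using \<open>0 < r\<close> \<open>0 < a\<close> by simp
  then have "G lam x \<le> 1 / r"
    unfolding G_eq by (intro frac_le) (use \<open>0 < r\<close> \<open>r \<le> 4 * pi * r\<close> in simp_all)
  then show "G lam x \<le> 1 / norm x"
    by (simp add: r_def)
  have "r * a \<le> exp (r * a)"
    using exp_ge_add_one_self[of "r * a"] by linarith
  then have "exp (- (r * a)) \<le> 1 / (r * a)"
    using \<open>0 < r\<close> \<open>0 < a\<close> by (simp add: exp_minus field_simps)
  then have "G lam x \<le> 1 / (r * a) / r"
    unfolding G_eq by (intro frac_le) (use \<open>0 < r\<close> \<open>0 < a\<close> \<open>r \<le> 4 * pi * r\<close> in simp_all)
  then show "G lam x \<le> 1 / (sqrt lam * (norm x)\<^sup>2)"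
    by (simp add: r_def a_def power2_eq_square mult_ac)
qed

lemma integrable_G_sq:
  assumes "0 < lam"
  shows "integrable lborel (\<lambda>x. (G lam x)\<^sup>2)"
proof -
  define c where "c = max 1 (1 / lam)"
  have bound: "(G lam x)\<^sup>2 \<le> c * min (1 / norm x ^ 2) (1 / norm x ^ 4)" for x :: "real^3"
  proof (cases "x = 0")
    case True
    then show ?thesis
      by (simp add: G_def)
  next
    case False
    have "(G lam x)\<^sup>2 \<le> (1 / norm x)\<^sup>2"
      using G_le(1)[OF assms False] G_nonneg by (rule power_mono)
    also have "\<dots> = 1 * (1 / norm x ^ 2)"
      by (simp add: power_one_over)
    also have "\<dots> \<le> c * (1 / norm x ^ 2)"
      by (intro mult_right_mono) (simp_all add: c_def)
    finally have near: "(G lam x)\<^sup>2 \<le> c * (1 / norm x ^ 2)" .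
    have "(G lam x)\<^sup>2 \<le> (1 / (sqrt lam * (norm x)\<^sup>2))\<^sup>2"
      using G_le(2)[OF assms False] G_nonneg by (rule power_mono)
    also have "\<dots> = 1 / lam * (1 / norm x ^ 4)"
      using assms by (simp add: power_mult_distrib power_one_over flip: power_mult)
    also have "\<dots> \<le> c * (1 / norm x ^ 4)"
      by (intro mult_right_mono) (simp_all add: c_def)
    finally have far: "(G lam x)\<^sup>2 \<le> c * (1 / norm x ^ 4)" .
    from near far show ?thesis
      by (simp add: min_def)
  qed
  have norm_le: "norm ((G lam x)\<^sup>2) \<le> norm (c * min (1 / norm x ^ 2) (1 / norm x ^ 4))" for x :: "real^3"
    using bound[of x] abs_ge_self[of "c * min (1 / norm x ^ 2) (1 / norm x ^ 4)"]
    unfolding real_norm_def abs_power2 by linarith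
  have "integrable lborel (\<lambda>x::real^3. c * min (1 / norm x ^ 2) (1 / norm x ^ 4))"
    by (intro integrable_mult_right integrable_min_inverse_norm_powers) simp_all
  then show ?thesis
    by (rule Bochner_Integration.integrable_bound) (use norm_le in auto)
qed

lemma power2_sgn_mult_sqrt_abs: "(sgn v * sqrt \<bar>v\<bar>)\<^sup>2 = \<bar>v\<bar>"
  for v :: real
  by (cases "v = 0") (simp_all add: power_mult_distrib sgn_if)

lemma hs_norm_sq_A_kernel_diff:
  assumes [measurable]: "V \<in> borel_measurable lborel"
  shows "hs_norm_sq (\<lambda>x y. A_kernel V lam eps x y - rank_one_kernel (G lam) (\<lambda>y. sqrt \<bar>V y\<bar>) x y)
       = (\<integral>\<^sup>+y. ennreal \<bar>V y\<bar> * sq_dist_translate (G lam) (eps *\<^sub>R y) \<partial>lborel)"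
proof -
  have factor: "(G lam (x - eps *\<^sub>R y) * sqrt \<bar>V y\<bar> - G lam x * sqrt \<bar>V y\<bar>)\<^sup>2
      = \<bar>V y\<bar> * (G lam (x - eps *\<^sub>R y) - G lam x)\<^sup>2" for x y
    by (simp add: power_mult_distrib flip: left_diff_distrib)
  have "hs_norm_sq (\<lambda>x y. A_kernel V lam eps x y - rank_one_kernel (G lam) (\<lambda>y. sqrt \<bar>V y\<bar>) x y)
      = (\<integral>\<^sup>+y. \<integral>\<^sup>+x. ennreal ((G lam (x - eps *\<^sub>R y) * sqrt \<bar>V y\<bar> - G lam x * sqrt \<bar>V y\<bar>)\<^sup>2) \<partial>lborel \<partial>lborel)"
    by (subst hs_norm_sq_iterated(2)) (simp_all add: A_kernel_def rank_one_kernel_def)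
  also have "\<dots> = (\<integral>\<^sup>+y. ennreal \<bar>V y\<bar> * sq_dist_translate (G lam) (eps *\<^sub>R y) \<partial>lborel)"
    by (simp add: factor ennreal_mult nn_integral_cmult sq_dist_translate_def)
  finally show ?thesis .
qed

lemma hs_norm_sq_C_kernel_diff:
  assumes [measurable]: "V \<in> borel_measurable lborel"
  shows "hs_norm_sq (\<lambda>x y. C_kernel V lam eps x y - rank_one_kernel (\<lambda>x. sgn (V x) * sqrt \<bar>V x\<bar>) (G lam) x y)
       = (\<integral>\<^sup>+x. ennreal \<bar>V x\<bar> * sq_dist_translate (G lam) (eps *\<^sub>R x) \<partial>lborel)"
proof -
  have factor: "(sgn (V x) * sqrt \<bar>V x\<bar> * G lam (eps *\<^sub>R x - y) - sgn (V x) * sqrt \<bar>V x\<bar> * G lam y)\<^sup>2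
      = \<bar>V x\<bar> * (G lam (y - eps *\<^sub>R x) - G lam y)\<^sup>2" for x y
  proof -
    have "(sgn (V x) * sqrt \<bar>V x\<bar> * G lam (eps *\<^sub>R x - y) - sgn (V x) * sqrt \<bar>V x\<bar> * G lam y)\<^sup>2
        = (sgn (V x) * sqrt \<bar>V x\<bar>)\<^sup>2 * (G lam (eps *\<^sub>R x - y) - G lam y)\<^sup>2"
      by (simp add: power_mult_distrib flip: right_diff_distrib)
    then show ?thesis
      by (simp add: power2_sgn_mult_sqrt_abs G_minus_commute[of lam "eps *\<^sub>R x"])
  qed
  have "hs_norm_sq (\<lambda>x y. C_kernel V lam eps x y - rank_one_kernel (\<lambda>x. sgn (V x) * sqrt \<bar>V x\<bar>) (G lam) x y)
      = (\<integral>\<^sup>+x. \<integral>\<^sup>+y. ennreal ((sgn (V x) * sqrt \<bar>V x\<bar> * G lam (eps *\<^sub>R x - y) - sgn (V x) * sqrt \<bar>V x\<bar> * G lam y)\<^sup>2) \<partial>lborel \<partial>lborel)"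
    by (subst hs_norm_sq_iterated(1)) (simp_all add: C_kernel_def rank_one_kernel_def)
  also have "\<dots> = (\<integral>\<^sup>+x. ennreal \<bar>V x\<bar> * sq_dist_translate (G lam) (eps *\<^sub>R x) \<partial>lborel)"
    by (simp add: factor ennreal_mult nn_integral_cmult sq_dist_translate_def)
  finally show ?thesis .
qed

theorem proposition3p3:
  fixes V :: "real^3 \<Rightarrow> real" and lam :: real
  assumes "integrable lborel V" and "lam > 0"
  shows "((\<lambda>eps. hs_norm_sq (\<lambda>x y. A_kernel V lam eps x y
              - rank_one_kernel (G lam) (\<lambda>y. sqrt \<bar>V y\<bar>) x y)) \<longlongrightarrow> 0) (at_right 0) \<and>
         ((\<lambda>eps. hs_norm_sq (\<lambda>x y. C_kernel V lam eps x y
              - rank_one_kernel (\<lambda>x. sgn (V x) * sqrt \<bar>V x\<bar>) (G lam) x y)) \<longlongrightarrow> 0) (at_right 0)"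
proof -
  have "V \<in> borel_measurable lborel"
    using assms(1) by simp
  moreover have "AE x in lborel. isCont (G lam) x"
    using AE_lborel_singleton[of 0] by eventually_elim (rule isCont_G)
  then have "((\<lambda>eps. \<integral>\<^sup>+y. ennreal \<bar>V y\<bar> * sq_dist_translate (G lam) (eps *\<^sub>R y) \<partial>lborel) \<longlongrightarrow> 0) (at 0)"
    by (intro weighted_sq_dist_translate_tendsto_0 assms(1) G_measurable G_nonneg integrable_G_sq assms(2))
  then have "((\<lambda>eps. \<integral>\<^sup>+y. ennreal \<bar>V y\<bar> * sq_dist_translate (G lam) (eps *\<^sub>R y) \<partial>lborel) \<longlongrightarrow> 0) (at_right 0)"
    by (rule tendsto_within_subset) simp
  ultimately show ?thesis
    by (simp add: hs_norm_sq_A_kernel_diff hs_norm_sq_C_kernel_diff)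
qed

end
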